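(* For every tree $T$, $\operatorname{diam}(\mathcal{C}_3(T))$ equals the maximum of $\|h\|_1$ over all balanced labelings $h$ of $T$.
   Context: Let $T$ be a finite tree with vertex set $V$ and edge set $E$. A proper 3-coloring of $T$ is a map $f\colon V\to\mathbb{Z}/3\mathbb{Z}$ with $f(u)\neq f(v)$ for every edge $uv\in E$. The 3-coloring graph $\mathcal{C}_3(T)$ has the proper 3-colorings as vertices, two colorings adjacent iff they differ at exactly one vertex. A labeling of $T$ is a map $h\colon V\to\mathbb{Z}$ with $|h(u)-h(v)|\le 1$ for every edge $uv\in E$; $\|h\|_1=\sum_{v\in V}|h(v)|$, and $h+m$ denotes $v\mapsto h(v)+m$. A labeling $h$ is balanced if $\|h\|_1\le\|h+3m\|_1$ for all $m\in\mathbb{Z}$. *)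

theory Defs
  imports Main "HOL-Library.FuncSet" "HOL-Library.Extended_Nat"
begin

definition is_path :: "'a set \<Rightarrow> 'a set set \<Rightarrow> 'a list \<Rightarrow> bool" where
  "is_path V E ps \<longleftrightarrow> ps \<noteq> [] \<and> set ps \<subseteq> V \<and>
     (\<forall>i. i + 1 < length ps \<longrightarrow> {ps ! i, ps ! (i+1)} \<in> E)"

definition is_cycle :: "'a set \<Rightarrow> 'a set set \<Rightarrow> 'a list \<Rightarrow> bool" where
  "is_cycle V E cs \<longleftrightarrow> length cs \<ge> 3 \<and> distinct cs \<and> is_path V E cs \<and> {last cs, hd cs} \<in> E"

definition is_tree :: "'a set \<Rightarrow> 'a set set \<Rightarrow> bool" where
  "is_tree V E \<longleftrightarrow> finite V \<and> V \<noteq> {} \<and>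
     (\<forall>e\<in>E. \<exists>u v. e = {u, v} \<and> u \<in> V \<and> v \<in> V \<and> u \<noteq> v) \<and>
     (\<forall>u\<in>V. \<forall>v\<in>V. \<exists>ps. is_path V E ps \<and> hd ps = u \<and> last ps = v) \<and>
     (\<nexists>cs. is_cycle V E cs)"

text \<open>Proper 3-colourings, colours in Z/3Z represented by {0,1,2}; extensional outside V.\<close>
definition proper3 :: "'a set \<Rightarrow> 'a set set \<Rightarrow> ('a \<Rightarrow> nat) \<Rightarrow> bool" where
  "proper3 V E f \<longleftrightarrow> f \<in> V \<rightarrow>\<^sub>E {0, 1, 2} \<and> (\<forall>u v. {u, v} \<in> E \<longrightarrow> f u \<noteq> f v)"

definition cadj :: "'a set \<Rightarrow> ('a \<Rightarrow> nat) \<Rightarrow> ('a \<Rightarrow> nat) \<Rightarrow> bool" where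
  "cadj V f g \<longleftrightarrow> card {v \<in> V. f v \<noteq> g v} = 1"

definition cwalk :: "'a set \<Rightarrow> 'a set set \<Rightarrow> ('a \<Rightarrow> nat) list \<Rightarrow> bool" where
  "cwalk V E fs \<longleftrightarrow> fs \<noteq> [] \<and> (\<forall>f\<in>set fs. proper3 V E f) \<and>
     (\<forall>i. i + 1 < length fs \<longrightarrow> cadj V (fs ! i) (fs ! (i+1)))"

text \<open>Graph distance in C_3(T) (infinity if not connected).\<close>
definition cdist :: "'a set \<Rightarrow> 'a set set \<Rightarrow> ('a \<Rightarrow> nat) \<Rightarrow> ('a \<Rightarrow> nat) \<Rightarrow> enat" where
  "cdist V E f g = (INF fs \<in> {fs. cwalk V E fs \<and> hd fs = f \<and> last fs = g}. enat (length fs - 1))"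

definition cdiam :: "'a set \<Rightarrow> 'a set set \<Rightarrow> enat" where
  "cdiam V E = (SUP p \<in> {(f, g). proper3 V E f \<and> proper3 V E g}. cdist V E (fst p) (snd p))"

definition is_labeling :: "'a set set \<Rightarrow> ('a \<Rightarrow> int) \<Rightarrow> bool" where
  "is_labeling E h \<longleftrightarrow> (\<forall>u v. {u, v} \<in> E \<longrightarrow> \<bar>h u - h v\<bar> \<le> 1)"

definition l1norm :: "'a set \<Rightarrow> ('a \<Rightarrow> int) \<Rightarrow> int" where
  "l1norm V h = (\<Sum>v\<in>V. \<bar>h v\<bar>)"

definition balanced :: "'a set \<Rightarrow> ('a \<Rightarrow> int) \<Rightarrow> bool" where
  "balanced V h \<longleftrightarrow> (\<forall>m::int. l1norm V h \<le> l1norm V (\<lambda>v. h v + 3 * m))"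

end

theory Submission
  imports Defs
begin

text \<open>
  A proper 3-colouring of a tree lifts to a height function \<phi> : V \<rightarrow> \<int>, i.e. one with
  \<bar>\<phi> u - \<phi> v\<bar> = 1 along edges, whose colours are the residues \<phi> v mod 3; the lift is unique up to
  adding a multiple of 3. Recolouring a single vertex v amounts to moving \<phi> v by \<plusminus>2, which is
  possible exactly when all neighbours of v lie on the same side of \<phi> v.

  Take lifts \<phi> of f and \<psi> of g with \<psi> - \<phi> even. Then h = (\<psi> - \<phi>) / 2 is a labeling, and the
  lifts \<psi> + 6m of g replace h by h + 3m. Moving \<phi> towards \<psi> at an extremal vertex where they
  differ (a lowest one where \<phi> < \<psi>, or a highest one where \<phi> > \<psi>) walks from f to g in
  \<parallel>h\<parallel> steps; choosing m so that h + 3m is balanced bounds the distance by the norm of a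
  balanced labeling. Conversely, lifting a walk from f to g step by step ends in a lift \<phi> + 2h' of g
  with \<parallel>h'\<parallel> at most the length of the walk, and h' = h + 3m for some m, so the walk is at least as
  long as the balanced representative h. Every labeling arises in this way, because a labeling h of
  a tree lifts to a pair of height functions \<phi>, \<phi> + 2h.
\<close>

section \<open>Paths and trees\<close>

lemma is_path_ConsD:
  assumes "is_path V E (x # xs)" "xs \<noteq> []"
  shows "is_path V E xs" "{x, hd xs} \<in> E"
proof -
  show "{x, hd xs} \<in> E" using assms unfolding is_path_def by (cases xs) fastforce+
  show "is_path V E xs" unfolding is_path_def
  proof (intro conjI allI impI)
    show "set xs \<subseteq> V" using assms(1) unfolding is_path_def by auto
    fix i assume "i + 1 < length xs"
    then have "Suc i + 1 < length (x # xs)" by simp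
    then show "{xs ! i, xs ! (i + 1)} \<in> E" using assms(1) unfolding is_path_def by fastforce
  qed fact
qed

lemma is_path_snoc:
  assumes "is_path V E ps" "w \<in> V" "{last ps, w} \<in> E"
  shows "is_path V E (ps @ [w])"
  unfolding is_path_def
proof (intro conjI allI impI)
  show "set (ps @ [w]) \<subseteq> V" using assms unfolding is_path_def by auto
  fix i assume i: "i + 1 < length (ps @ [w])"
  show "{(ps @ [w]) ! i, (ps @ [w]) ! (i + 1)} \<in> E"
  proof (cases "i + 1 < length ps")
    case True
    then show ?thesis using assms(1) unfolding is_path_def by (simp add: nth_append)
  next
    case False
    then have "i = length ps - 1" using i by simp
    moreover have "ps \<noteq> []" using assms(1) unfolding is_path_def by simp
    ultimately show ?thesis using assms(3) by (simp add: nth_append last_conv_nth)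
  qed
qed simp

lemma is_path_drop:
  assumes "is_path V E ps" "i < length ps"
  shows "is_path V E (drop i ps)"
  unfolding is_path_def
proof (intro conjI allI impI)
  show "drop i ps \<noteq> []" using assms(2) by simp
  show "set (drop i ps) \<subseteq> V" using assms(1) unfolding is_path_def by (meson order_trans set_drop_subset)
  fix j assume "j + 1 < length (drop i ps)"
  then have "(i + j) + 1 < length ps" by simp
  then show "{drop i ps ! j, drop i ps ! (j + 1)} \<in> E"
    using assms unfolding is_path_def by (simp add: add.assoc)
qed

lemma is_cycle_mono: "is_cycle V' E' cs \<Longrightarrow> V' \<subseteq> V \<Longrightarrow> E' \<subseteq> E \<Longrightarrow> is_cycle V E cs"
  unfolding is_cycle_def is_path_def by blast

lemma is_path_last_invariant:
  assumes "is_path V E ps" "\<And>u v. {u, v} \<in> E \<Longrightarrow> P u \<Longrightarrow> P v" "P (hd ps)"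
  shows "P (last ps)"
  using assms
proof (induction ps)
  case (Cons x xs)
  show ?case
  proof (cases "xs = []")
    case False
    with Cons.prems is_path_ConsD[OF Cons.prems(1) False] show ?thesis
      using Cons.IH by simp
  qed (use Cons.prems in simp)
qed (simp add: is_path_def)

lemma tree_edge_invariant:
  assumes "is_tree V E" "\<And>u v. {u, v} \<in> E \<Longrightarrow> P u \<Longrightarrow> P v" "r \<in> V" "P r" "v \<in> V"
  shows "P v"
proof -
  obtain ps where "is_path V E ps" "hd ps = r" "last ps = v"
    using assms(1,3,5) unfolding is_tree_def by blast
  then show ?thesis using is_path_last_invariant[of V E ps P] assms(2,4) by blast
qed

lemma tree_edgeD:
  assumes "is_tree V E" "{u, v} \<in> E"
  shows "u \<in> V" "v \<in> V" "u \<noteq> v"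
proof -
  obtain a b where "{u, v} = {a, b}" "a \<in> V" "b \<in> V" "a \<noteq> b"
    using assms unfolding is_tree_def by blast
  then show "u \<in> V" "v \<in> V" "u \<noteq> v" by (auto simp: doubleton_eq_iff)
qed

lemma tree_Union_edges_subset: "is_tree V E \<Longrightarrow> \<Union>E \<subseteq> V"
  unfolding is_tree_def by fastforce

text \<open>The last vertex of a longest simple path is a leaf: any other neighbour would either extend
  the path or close a cycle.\<close>
lemma acyclic_graph_has_leaf:
  assumes fin: "finite V" and "V \<noteq> {}"
    and edges: "\<And>u v. {u, v} \<in> E \<Longrightarrow> u \<in> V \<and> v \<in> V \<and> u \<noteq> v"
    and acyclic: "\<nexists>cs. is_cycle V E cs"
  obtains x where "x \<in> V" "\<And>y z. {x, y} \<in> E \<Longrightarrow> {x, z} \<in> E \<Longrightarrow> y = z"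
proof -
  obtain v where v: "v \<in> V" using assms(2) by blast
  let ?P = "\<lambda>ps. is_path V E ps \<and> distinct ps"
  have "length ps < card V + 1" if "?P ps" for ps
    using that card_mono[OF fin, of "set ps"] by (auto simp: is_path_def distinct_card)
  then obtain ps where ps: "?P ps" and longest: "\<And>qs. ?P qs \<Longrightarrow> length qs \<le> length ps"
    using ex_has_greatest_nat[of ?P "[v]" length "card V + 1"] v by (auto simp: is_path_def)
  have "ps \<noteq> []" using ps by (simp add: is_path_def)
  have neighbour: "w = ps ! (length ps - 2)" if w: "{last ps, w} \<in> E" for w
  proof -
    have "w \<in> V" "w \<noteq> last ps" using edges[OF w] by auto
    have "w \<in> set ps"
    proof (rule ccontr)
      assume "w \<notin> set ps"
      then have "?P (ps @ [w])" using is_path_snoc[OF _ \<open>w \<in> V\<close> w] ps by simp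
      then show False using longest[of "ps @ [w]"] by simp
    qed
    then obtain i where i: "i < length ps" "ps ! i = w" by (auto simp: in_set_conv_nth)
    have "i \<noteq> length ps - 1" using \<open>w \<noteq> last ps\<close> i \<open>ps \<noteq> []\<close> by (auto simp: last_conv_nth)
    moreover have "\<not> i < length ps - 2"
    proof
      assume "i < length ps - 2"
      then have "is_cycle V E (drop i ps)"
        using ps i w is_path_drop[of V E ps i] \<open>ps \<noteq> []\<close>
        by (simp add: is_cycle_def hd_drop_conv_nth)
      with acyclic show False by blast
    qed
    ultimately have "i = length ps - 2" using i(1) by linarith
    then show ?thesis using i(2) by simp
  qed
  have "last ps \<in> V" using ps \<open>ps \<noteq> []\<close> unfolding is_path_def by auto
  with neighbour show thesis using that by metis
qed

lemma compatible_choice_extend_to_leaf: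
  assumes leaf: "\<And>y z. {x, y} \<in> E \<Longrightarrow> {x, z} \<in> E \<Longrightarrow> y = z"
    and edges: "\<And>u v. {u, v} \<in> E \<Longrightarrow> u \<in> V \<and> v \<in> V \<and> u \<noteq> v"
    and "x \<in> V" "S x \<noteq> {}"
    and extend: "\<And>u v a. {u, v} \<in> E \<Longrightarrow> a \<in> S u \<Longrightarrow> \<exists>b\<in>S v. C u v a b"
    and C_sym: "\<And>u v a b. C u v a b \<Longrightarrow> C v u b a"
    and \<phi>S: "\<forall>v\<in>V - {x}. \<phi> v \<in> S v"
    and \<phi>C: "\<forall>u v. {u, v} \<in> E \<longrightarrow> x \<notin> {u, v} \<longrightarrow> C u v (\<phi> u) (\<phi> v)"
  shows "\<exists>\<psi>. (\<forall>v\<in>V. \<psi> v \<in> S v) \<and> (\<forall>u v. {u, v} \<in> E \<longrightarrow> C u v (\<psi> u) (\<psi> v))"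
proof -
  have "\<exists>b\<in>S x. \<forall>y. {x, y} \<in> E \<longrightarrow> C y x (\<phi> y) b"
  proof (cases "\<exists>y. {x, y} \<in> E")
    case True
    then obtain y where y: "{x, y} \<in> E" by blast
    then have "{y, x} \<in> E" "\<phi> y \<in> S y" using \<phi>S edges[OF y] by (auto simp: insert_commute)
    then obtain b where "b \<in> S x" "C y x (\<phi> y) b" using extend by blast
    then show ?thesis using leaf[OF y] by blast
  qed (use \<open>S x \<noteq> {}\<close> in blast)
  then obtain b where b: "b \<in> S x" "\<And>y. {x, y} \<in> E \<Longrightarrow> C y x (\<phi> y) b" by blast
  show ?thesis
  proof (intro exI[of _ "\<phi>(x := b)"] conjI allI impI ballI)
    show "(\<phi>(x := b)) v \<in> S v" if "v \<in> V" for v using that \<phi>S b by auto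
    fix u v assume uv: "{u, v} \<in> E"
    then have "u \<noteq> v" using edges by blast
    consider "u = x" | "v = x" | "x \<notin> {u, v}" by blast
    then show "C u v ((\<phi>(x := b)) u) ((\<phi>(x := b)) v)"
    proof cases
      case 1
      then show ?thesis using b(2)[of v] uv \<open>u \<noteq> v\<close> C_sym by auto
    next
      case 2
      then show ?thesis using b(2)[of u] uv \<open>u \<noteq> v\<close> by (auto simp: insert_commute)
    next
      case 3
      then show ?thesis using \<phi>C uv by auto
    qed
  qed
qed

lemma acyclic_graph_compatible_choice:
  fixes S :: "'a \<Rightarrow> 'b set" and C :: "'a \<Rightarrow> 'a \<Rightarrow> 'b \<Rightarrow> 'b \<Rightarrow> bool"
  assumes "finite V"
    and "\<And>u v. {u, v} \<in> E \<Longrightarrow> u \<in> V \<and> v \<in> V \<and> u \<noteq> v"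
    and "\<nexists>cs. is_cycle V E cs"
    and "\<And>v. v \<in> V \<Longrightarrow> S v \<noteq> {}"
    and "\<And>u v a. {u, v} \<in> E \<Longrightarrow> a \<in> S u \<Longrightarrow> \<exists>b\<in>S v. C u v a b"
    and C_sym: "\<And>u v a b. C u v a b \<Longrightarrow> C v u b a"
  shows "\<exists>\<phi>. (\<forall>v\<in>V. \<phi> v \<in> S v) \<and> (\<forall>u v. {u, v} \<in> E \<longrightarrow> C u v (\<phi> u) (\<phi> v))"
  using assms(1-5)
proof (induction "card V" arbitrary: V E rule: less_induct)
  case less
  show ?case
  proof (cases "V = {}")
    case True
    then show ?thesis using less.prems(2) by blast
  next
    case False
    obtain x where "x \<in> V" and leaf: "\<And>y z. {x, y} \<in> E \<Longrightarrow> {x, z} \<in> E \<Longrightarrow> y = z"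
      using acyclic_graph_has_leaf[OF less.prems(1) False less.prems(2,3)] by blast
    define E' where "E' = {e \<in> E. x \<notin> e}"
    have card: "card (V - {x}) < card V" using \<open>x \<in> V\<close> less.prems(1) by (meson card_Diff1_less)
    have fin: "finite (V - {x})" using less.prems(1) by simp
    have edges: "u \<in> V - {x} \<and> v \<in> V - {x} \<and> u \<noteq> v" if "{u, v} \<in> E'" for u v
      using that less.prems(2)[of u v] unfolding E'_def by auto
    have acyclic: "\<nexists>cs. is_cycle (V - {x}) E' cs"
      using less.prems(3) is_cycle_mono[of "V - {x}" E' _ V E] unfolding E'_def by blast
    obtain \<phi> where \<phi>S: "\<forall>v\<in>V - {x}. \<phi> v \<in> S v"
      and \<phi>C: "\<forall>u v. {u, v} \<in> E' \<longrightarrow> C u v (\<phi> u) (\<phi> v)"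
      using less.hyps[OF card fin edges acyclic] less.prems(4,5) unfolding E'_def by blast
    have "\<forall>u v. {u, v} \<in> E \<longrightarrow> x \<notin> {u, v} \<longrightarrow> C u v (\<phi> u) (\<phi> v)"
      using \<phi>C unfolding E'_def by auto
    then show ?thesis
      using compatible_choice_extend_to_leaf[of x E V S C \<phi>, OF leaf less.prems(2) \<open>x \<in> V\<close>
          less.prems(4)[OF \<open>x \<in> V\<close>] less.prems(5) C_sym \<phi>S] by blast
  qed
qed

section \<open>Height functions\<close>

definition height_fun :: "'a set set \<Rightarrow> ('a \<Rightarrow> int) \<Rightarrow> bool" where
  "height_fun E \<phi> \<longleftrightarrow> (\<forall>u v. {u, v} \<in> E \<longrightarrow> \<bar>\<phi> u - \<phi> v\<bar> = 1)"

definition height_coloring :: "'a set \<Rightarrow> ('a \<Rightarrow> int) \<Rightarrow> 'a \<Rightarrow> nat" where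
  "height_coloring V \<phi> = (\<lambda>v. if v \<in> V then nat (\<phi> v mod 3) else undefined)"

lemma height_funD: "height_fun E \<phi> \<Longrightarrow> {u, v} \<in> E \<Longrightarrow> \<bar>\<phi> u - \<phi> v\<bar> = 1"
  unfolding height_fun_def by blast

lemma height_fun_edge_distinct: "height_fun E \<phi> \<Longrightarrow> {u, v} \<in> E \<Longrightarrow> u \<noteq> v"
  using height_funD by fastforce

lemma height_fun_add_const: "height_fun E \<phi> \<Longrightarrow> height_fun E (\<lambda>v. \<phi> v + c)"
  unfolding height_fun_def by simp

lemma height_fun_uminus: "height_fun E (\<lambda>v. - \<phi> v) \<longleftrightarrow> height_fun E \<phi>"
proof -
  have "\<bar>- a - - b\<bar> = \<bar>a - b\<bar>" for a b :: int by arith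
  then show ?thesis unfolding height_fun_def by presburger
qed

lemma height_coloring_apply: "v \<in> V \<Longrightarrow> height_coloring V \<phi> v = nat (\<phi> v mod 3)"
  unfolding height_coloring_def by simp

lemma height_coloring_eq_iff:
  "height_coloring V \<phi> = height_coloring V \<psi> \<longleftrightarrow> (\<forall>v\<in>V. \<phi> v mod 3 = \<psi> v mod 3)"
  unfolding height_coloring_def fun_eq_iff by (auto simp: eq_nat_nat_iff)

lemma proper3_height_coloring:
  assumes "\<Union>E \<subseteq> V" "height_fun E \<phi>"
  shows "proper3 V E (height_coloring V \<phi>)"
  unfolding proper3_def
proof (intro conjI allI impI)
  have "nat (\<phi> v mod 3) \<in> {0, 1, 2}" for v
    using pos_mod_bound[of 3 "\<phi> v"] pos_mod_sign[of 3 "\<phi> v"] by (auto simp: nat_eq_iff)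
  then show "height_coloring V \<phi> \<in> V \<rightarrow>\<^sub>E {0, 1, 2}"
    unfolding height_coloring_def by auto
  fix u v assume e: "{u, v} \<in> E"
  then have "u \<in> V" "v \<in> V" using assms(1) by auto
  moreover have "\<phi> u mod 3 \<noteq> \<phi> v mod 3"
    using height_funD[OF assms(2) e] by presburger
  ultimately show "height_coloring V \<phi> u \<noteq> height_coloring V \<phi> v"
    by (simp add: height_coloring_apply eq_nat_nat_iff)
qed

lemma height_fun_update:
  assumes "height_fun E \<phi>" "\<bar>s\<bar> = 1" "\<And>w. {v, w} \<in> E \<Longrightarrow> \<phi> w = \<phi> v + s"
  shows "height_fun E (\<phi>(v := \<phi> v + 2 * s))"
  unfolding height_fun_def
proof (intro allI impI)
  fix a b assume e: "{a, b} \<in> E"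
  then have "a \<noteq> b" using height_fun_edge_distinct[OF assms(1)] by blast
  consider "a = v" | "b = v" | "a \<noteq> v" "b \<noteq> v" by blast
  then show "\<bar>(\<phi>(v := \<phi> v + 2 * s)) a - (\<phi>(v := \<phi> v + 2 * s)) b\<bar> = 1"
  proof cases
    case 1
    then show ?thesis using assms(2) assms(3)[of b] e \<open>a \<noteq> b\<close> by simp
  next
    case 2
    then show ?thesis using assms(2) assms(3)[of a] e \<open>a \<noteq> b\<close> by (simp add: insert_commute)
  next
    case 3
    then show ?thesis using height_funD[OF assms(1) e] by simp
  qed
qed

lemma cadj_height_coloring_update:
  assumes "v \<in> V" "\<not> 3 dvd t"
  shows "cadj V (height_coloring V \<phi>) (height_coloring V (\<phi>(v := \<phi> v + t)))"
proof -
  have "\<phi> v mod 3 \<noteq> (\<phi> v + t) mod 3" using assms(2) by presburger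
  then have "{u \<in> V. height_coloring V \<phi> u \<noteq> height_coloring V (\<phi>(v := \<phi> v + t)) u} = {v}"
    using assms(1) by (auto simp: height_coloring_apply eq_nat_nat_iff split: if_splits)
  then show ?thesis unfolding cadj_def by simp
qed

lemma mod3_residue_by_unit:
  fixes a c :: int
  assumes "c \<in> {0, 1, 2}" "c \<noteq> a mod 3"
  obtains s where "\<bar>s\<bar> = 1" "(a + 2 * s) mod 3 = c" "(a - s) mod 3 = c"
proof -
  have shift: "(a + k) mod 3 = (a mod 3 + k) mod 3" for k by (simp add: mod_add_left_eq)
  have "a mod 3 \<in> {0, 1, 2}" using pos_mod_bound[of 3 a] pos_mod_sign[of 3 a] by auto
  then have "(a + 2) mod 3 = c \<and> (a + -1) mod 3 = c \<or> (a + -2) mod 3 = c \<and> (a + 1) mod 3 = c"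
    unfolding shift using assms by auto
  then show ?thesis using that[of 1] that[of "-1"] by auto
qed

lemma mod3_neighbour:
  fixes a c :: int
  assumes "c \<in> {0, 1, 2}" "c \<noteq> a mod 3"
  obtains b where "\<bar>a - b\<bar> = 1" "b mod 3 = c"
proof -
  obtain s where "\<bar>s\<bar> = 1" "(a - s) mod 3 = c" using mod3_residue_by_unit[OF assms] by blast
  then show ?thesis using that[of "a - s"] by simp
qed

lemma proper3_lift:
  assumes "is_tree V E" "proper3 V E f"
  obtains \<phi> where "height_fun E \<phi>" "height_coloring V \<phi> = f"
proof -
  have f: "f \<in> V \<rightarrow>\<^sub>E {0, 1, 2}" "\<And>u v. {u, v} \<in> E \<Longrightarrow> f u \<noteq> f v"
    using assms(2) unfolding proper3_def by blast+
  have "\<exists>\<phi>. (\<forall>v\<in>V. \<phi> v \<in> {a. a mod 3 = int (f v)}) \<and>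
      (\<forall>u v. {u, v} \<in> E \<longrightarrow> \<bar>\<phi> u - \<phi> v\<bar> = 1)"
  proof (rule acyclic_graph_compatible_choice)
    show "finite V" "\<nexists>cs. is_cycle V E cs" using assms(1) unfolding is_tree_def by blast+
    show "u \<in> V \<and> v \<in> V \<and> u \<noteq> v" if "{u, v} \<in> E" for u v
      using tree_edgeD[OF assms(1) that] by blast
    show "{a. a mod 3 = int (f v)} \<noteq> {}" if "v \<in> V" for v
    proof -
      have "f v \<in> {0, 1, 2}" using f(1) that by blast
      then have "int (f v) mod 3 = int (f v)" by auto
      then show ?thesis by blast
    qed
    fix u v a assume e: "{u, v} \<in> E" and "a \<in> {a. a mod 3 = int (f u)}"
    have "f v \<in> {0, 1, 2}" using f(1) tree_edgeD(2)[OF assms(1) e] by blast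
    then have "int (f v) \<in> {0, 1, 2}" by auto
    moreover have "int (f v) \<noteq> a mod 3" using f(2)[OF e] \<open>a \<in> _\<close> by simp
    ultimately obtain b where "\<bar>a - b\<bar> = 1" "b mod 3 = int (f v)" by (rule mod3_neighbour)
    then show "\<exists>b\<in>{b. b mod 3 = int (f v)}. \<bar>a - b\<bar> = 1" by blast
  qed auto
  then obtain \<phi> where \<phi>: "\<And>v. v \<in> V \<Longrightarrow> \<phi> v mod 3 = int (f v)" "height_fun E \<phi>"
    unfolding height_fun_def by auto
  have "height_coloring V \<phi> v = f v" for v
    using \<phi>(1)[of v] PiE_arb[OF f(1), of v] unfolding height_coloring_def by auto
  then have "height_coloring V \<phi> = f" by (rule ext)
  then show ?thesis by (rule that[OF \<phi>(2)])
qed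

lemma labeling_lift:
  assumes "is_tree V E" "is_labeling E h"
  obtains \<phi> where "height_fun E \<phi>" "height_fun E (\<lambda>v. \<phi> v + 2 * h v)"
proof -
  let ?C = "\<lambda>u v (a::int) b. \<bar>a - b\<bar> = 1 \<and> \<bar>(a + 2 * h u) - (b + 2 * h v)\<bar> = 1"
  have "\<exists>\<phi>. (\<forall>v\<in>V. \<phi> v \<in> UNIV) \<and> (\<forall>u v. {u, v} \<in> E \<longrightarrow> ?C u v (\<phi> u) (\<phi> v))"
  proof (rule acyclic_graph_compatible_choice)
    show "finite V" "\<nexists>cs. is_cycle V E cs" using assms(1) unfolding is_tree_def by blast+
    show "u \<in> V \<and> v \<in> V \<and> u \<noteq> v" if "{u, v} \<in> E" for u v
      using tree_edgeD[OF assms(1) that] by blast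
    fix u v a assume "{u, v} \<in> E"
    then have "\<bar>h u - h v\<bar> \<le> 1" using assms(2) unfolding is_labeling_def by blast
    then have "h v = h u + 1 \<or> h v = h u \<or> h v = h u - 1" by arith
    then have "?C u v a (if h v > h u then a - 1 else a + 1)" by auto
    then show "\<exists>b\<in>UNIV. ?C u v a b" by blast
  qed auto
  then show ?thesis using that unfolding height_fun_def by blast
qed

lemma height_fun_diff_edge:
  assumes "height_fun E \<phi>" "height_fun E \<psi>" "{a, b} \<in> E"
  shows "(\<psi> b - \<phi> b) - (\<psi> a - \<phi> a) \<in> {-2, 0, 2}"
  using height_funD[OF assms(1,3)] height_funD[OF assms(2,3)] by (simp; arith)

lemma height_funs_diff_parity:
  assumes "is_tree V E" "height_fun E \<phi>" "height_fun E \<psi>" "r \<in> V" "v \<in> V"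
  shows "even (\<psi> v - \<phi> v) \<longleftrightarrow> even (\<psi> r - \<phi> r)"
proof (rule tree_edge_invariant[OF assms(1) _ assms(4) _ assms(5)])
  fix a b assume e: "{a, b} \<in> E" and "even (\<psi> a - \<phi> a) \<longleftrightarrow> even (\<psi> r - \<phi> r)"
  moreover have "(\<psi> b - \<phi> b) - (\<psi> a - \<phi> a) \<in> {-2, 0, 2}"
    using height_fun_diff_edge[OF assms(2,3) e] .
  ultimately show "even (\<psi> b - \<phi> b) \<longleftrightarrow> even (\<psi> r - \<phi> r)"
    by (simp only: insert_iff empty_iff) presburger
qed simp

lemma height_coloring_eq_imp_shift:
  assumes "is_tree V E" "height_fun E \<phi>" "height_fun E \<psi>"
    and "height_coloring V \<phi> = height_coloring V \<psi>"
  obtains k where "\<And>v. v \<in> V \<Longrightarrow> \<psi> v = \<phi> v + 3 * k"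
proof -
  obtain r where r: "r \<in> V" using assms(1) unfolding is_tree_def by blast
  have dvd: "3 dvd (\<psi> v - \<phi> v)" if "v \<in> V" for v
    using assms(4) that by (simp add: height_coloring_eq_iff mod_eq_dvd_iff dvd_diff_commute)
  have shift: "\<psi> v - \<phi> v = \<psi> r - \<phi> r" if "v \<in> V" for v
  proof (rule tree_edge_invariant[OF assms(1) _ r _ that])
    fix a b assume e: "{a, b} \<in> E" and "\<psi> a - \<phi> a = \<psi> r - \<phi> r"
    have "a \<in> V" "b \<in> V" using tree_edgeD[OF assms(1) e] by auto
    then have "3 dvd (\<psi> b - \<phi> b) - (\<psi> a - \<phi> a)" using dvd by simp
    then have "\<psi> b - \<phi> b = \<psi> a - \<phi> a" using height_fun_diff_edge[OF assms(2,3) e] by auto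
    then show "\<psi> b - \<phi> b = \<psi> r - \<phi> r" using \<open>\<psi> a - \<phi> a = \<psi> r - \<phi> r\<close> by simp
  qed simp
  obtain k where "\<psi> r - \<phi> r = 3 * k" using dvd[OF r] by blast
  then have "\<psi> v = \<phi> v + 3 * k" if "v \<in> V" for v using shift[OF that] by simp
  then show ?thesis using that by blast
qed

section \<open>Walks in the colouring graph\<close>

lemma cwalk_singleton: "proper3 V E f \<Longrightarrow> cwalk V E [f]"
  unfolding cwalk_def by simp

lemma cwalk_Cons:
  assumes "cwalk V E fs" "proper3 V E f" "cadj V f (hd fs)"
  shows "cwalk V E (f # fs)"
  unfolding cwalk_def
proof (intro conjI allI impI ballI)
  show "proper3 V E g" if "g \<in> set (f # fs)" for g
    using that assms(1,2) unfolding cwalk_def by auto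
  fix i assume i: "i + 1 < length (f # fs)"
  show "cadj V ((f # fs) ! i) ((f # fs) ! (i + 1))"
  proof (cases i)
    case 0
    then show ?thesis using assms(1,3) unfolding cwalk_def by (simp add: hd_conv_nth)
  next
    case (Suc j)
    then show ?thesis using assms(1) i unfolding cwalk_def by simp
  qed
qed simp

lemma cwalk_ConsD:
  assumes "cwalk V E (f # fs)" "fs \<noteq> []"
  shows "cwalk V E fs" "cadj V f (hd fs)"
proof -
  have "cadj V ((f # fs) ! 0) ((f # fs) ! (0 + 1))" using assms unfolding cwalk_def by auto
  then show "cadj V f (hd fs)" using assms(2) by (simp add: hd_conv_nth)
  show "cwalk V E fs" unfolding cwalk_def
  proof (intro conjI allI impI ballI)
    show "proper3 V E g" if "g \<in> set fs" for g using that assms(1) unfolding cwalk_def by simp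
    fix i assume "i + 1 < length fs"
    then have "Suc i + 1 < length (f # fs)" by simp
    then have "cadj V ((f # fs) ! Suc i) ((f # fs) ! (Suc i + 1))"
      using assms(1) unfolding cwalk_def by blast
    then show "cadj V (fs ! i) (fs ! (i + 1))" by simp
  qed fact
qed

lemma cdist_le_cwalk:
  "cwalk V E fs \<Longrightarrow> cdist V E (hd fs) (last fs) \<le> enat (length fs - 1)"
  unfolding cdist_def by (rule INF_lower) simp

lemma l1norm_nonneg: "0 \<le> l1norm V h"
  unfolding l1norm_def by (simp add: sum_nonneg)

lemma l1norm_eq_0_iff: "finite V \<Longrightarrow> l1norm V h = 0 \<longleftrightarrow> (\<forall>v\<in>V. h v = 0)"
  unfolding l1norm_def by (simp add: sum_nonneg_eq_0_iff)

lemma l1norm_update: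
  assumes "finite V" "v \<in> V"
  shows "l1norm V (h(v := x)) = l1norm V h - \<bar>h v\<bar> + \<bar>x\<bar>"
proof -
  have "l1norm V (h(v := x)) = \<bar>x\<bar> + (\<Sum>u\<in>V - {v}. \<bar>(h(v := x)) u\<bar>)"
    unfolding l1norm_def using sum.remove[OF assms, of "\<lambda>u. \<bar>(h(v := x)) u\<bar>"] by simp
  also have "(\<Sum>u\<in>V - {v}. \<bar>(h(v := x)) u\<bar>) = (\<Sum>u\<in>V - {v}. \<bar>h u\<bar>)"
    by (rule sum.cong) auto
  also have "\<dots> = l1norm V h - \<bar>h v\<bar>"
    unfolding l1norm_def using sum.remove[OF assms, of "\<lambda>u. \<bar>h u\<bar>"] by simp
  finally show ?thesis by linarith
qed

lemma l1norm_update_toward_zero: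
  assumes "finite V" "v \<in> V" "\<bar>s\<bar> = 1" "0 < s * h v"
  shows "l1norm V (h(v := h v - s)) = l1norm V h - 1"
proof -
  have "s = 1 \<or> s = -1" using assms(3) by arith
  then have "\<bar>h v - s\<bar> = \<bar>h v\<bar> - 1" using assms(4) by auto
  then show ?thesis using l1norm_update[OF assms(1,2), of h "h v - s"] by simp
qed

lemma l1norm_update_le:
  assumes "finite V" "v \<in> V"
  shows "l1norm V (h(v := h v + s)) \<le> l1norm V h + \<bar>s\<bar>"
  using l1norm_update[OF assms, of h "h v + s"] abs_triangle_ineq[of "h v" s] by simp

lemma l1norm_cong: "(\<And>v. v \<in> V \<Longrightarrow> h v = h' v) \<Longrightarrow> l1norm V h = l1norm V h'"
  unfolding l1norm_def by (rule sum.cong) simp_all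

text \<open>Among the vertices where \<open>\<psi>\<close> lies above \<open>\<phi>\<close>, one where \<open>\<phi>\<close> is lowest can be raised by 2:
  a lower neighbour \<open>w\<close> would satisfy \<open>h w \<le> 0\<close> by minimality, so that \<open>\<psi> v - \<psi> w \<ge> 3\<close>.\<close>
lemma height_fun_raise_lowest:
  assumes "finite V" "\<Union>E \<subseteq> V" "height_fun E \<phi>" "height_fun E \<psi>"
    and rel: "\<And>v. v \<in> V \<Longrightarrow> \<psi> v = \<phi> v + 2 * h v"
    and "v\<^sub>0 \<in> V" "h v\<^sub>0 > 0"
  obtains v where "v \<in> V" "h v > 0" "height_fun E (\<phi>(v := \<phi> v + 2))"
proof -
  let ?P = "{v \<in> V. h v > 0}"
  define v where "v = arg_min_on \<phi> ?P"
  have "finite ?P" "?P \<noteq> {}" using assms(1,6,7) by auto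
  then have v: "v \<in> V" "h v > 0" and lowest: "\<And>w. w \<in> V \<Longrightarrow> h w > 0 \<Longrightarrow> \<phi> v \<le> \<phi> w"
    using arg_min_if_finite[of ?P \<phi>] unfolding v_def by force+
  have "\<phi> w = \<phi> v + 1" if e: "{v, w} \<in> E" for w
  proof (rule ccontr)
    assume "\<phi> w \<noteq> \<phi> v + 1"
    then have "\<phi> w = \<phi> v - 1" using height_funD[OF assms(3) e] by arith
    moreover have "w \<in> V" using e assms(2) by auto
    ultimately have "h w \<le> 0" using lowest by force
    then show False using height_funD[OF assms(4) e] rel[OF v(1)] rel[OF \<open>w \<in> V\<close>] v(2)
      \<open>\<phi> w = \<phi> v - 1\<close> by simp
  qed
  then have "height_fun E (\<phi>(v := \<phi> v + 2 * 1))" by (intro height_fun_update[OF assms(3)]) auto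
  then show ?thesis using that v by simp
qed

lemma height_fun_step_towards:
  assumes "finite V" "\<Union>E \<subseteq> V" "height_fun E \<phi>" "height_fun E \<psi>"
    and rel: "\<And>v. v \<in> V \<Longrightarrow> \<psi> v = \<phi> v + 2 * h v"
    and "v\<^sub>0 \<in> V" "h v\<^sub>0 \<noteq> 0"
  obtains v s where "v \<in> V" "\<bar>s\<bar> = 1" "0 < s * h v" "height_fun E (\<phi>(v := \<phi> v + 2 * s))"
proof (cases "h v\<^sub>0 > 0")
  case True
  then obtain v where "v \<in> V" "h v > 0" "height_fun E (\<phi>(v := \<phi> v + 2))"
    using height_fun_raise_lowest[OF assms(1-4) rel assms(6)] by blast
  then show ?thesis using that[of v 1] by simp
next
  case False
  then have "- h v\<^sub>0 > 0" using assms(7) by simp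
  moreover have "height_fun E (\<lambda>w. - \<phi> w)" "height_fun E (\<lambda>w. - \<psi> w)"
    using assms(3,4) by (simp_all add: height_fun_uminus)
  moreover have "- \<psi> w = - \<phi> w + 2 * - h w" if "w \<in> V" for w using rel[OF that] by simp
  ultimately obtain v where v: "v \<in> V" "- h v > 0"
    and "height_fun E ((\<lambda>w. - \<phi> w)(v := - \<phi> v + 2))"
    using height_fun_raise_lowest[where \<phi> = "\<lambda>w. - \<phi> w" and \<psi> = "\<lambda>w. - \<psi> w" and h = "\<lambda>w. - h w",
        OF assms(1,2) _ _ _ assms(6)] by blast
  moreover have "(\<lambda>w. - \<phi> w)(v := - \<phi> v + 2) = (\<lambda>w. - (\<phi>(v := \<phi> v + 2 * -1)) w)" by auto
  ultimately have "height_fun E (\<phi>(v := \<phi> v + 2 * -1))" by (simp only: height_fun_uminus)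
  then show ?thesis using that[of v "-1"] v by simp
qed

lemma height_coloring_cwalk:
  assumes "is_tree V E" "height_fun E \<phi>" "height_fun E \<psi>"
    and "\<And>v. v \<in> V \<Longrightarrow> \<psi> v = \<phi> v + 2 * h v"
  obtains fs where "cwalk V E fs" "hd fs = height_coloring V \<phi>" "last fs = height_coloring V \<psi>"
    "length fs = nat (l1norm V h) + 1"
proof -
  have fin: "finite V" using assms(1) unfolding is_tree_def by blast
  have edges: "\<Union>E \<subseteq> V" using tree_Union_edges_subset[OF assms(1)] .
  have walk: "\<exists>fs. cwalk V E fs \<and> hd fs = height_coloring V \<phi> \<and> last fs = height_coloring V \<psi> \<and>
      length fs = n + 1" if "l1norm V h = int n" for n
    using assms(2-4) that
  proof (induction n arbitrary: \<phi> h)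
    case 0
    then have "height_coloring V \<phi> = height_coloring V \<psi>"
      using fin by (simp add: l1norm_eq_0_iff height_coloring_eq_iff)
    then show ?case using cwalk_singleton[OF proper3_height_coloring[OF edges "0.prems"(1)]]
      by (intro exI[of _ "[height_coloring V \<phi>]"]) simp
  next
    case (Suc n)
    have "l1norm V h \<noteq> 0" using Suc.prems(4) by simp
    then obtain v\<^sub>0 where "v\<^sub>0 \<in> V" "h v\<^sub>0 \<noteq> 0" using l1norm_eq_0_iff[OF fin] by blast
    then obtain v s where v: "v \<in> V" "\<bar>s\<bar> = 1" "0 < s * h v"
      and moved: "height_fun E (\<phi>(v := \<phi> v + 2 * s))"
      using height_fun_step_towards[OF fin edges Suc.prems(1-3)] by blast
    have rel: "\<psi> w = (\<phi>(v := \<phi> v + 2 * s)) w + 2 * (h(v := h v - s)) w" if "w \<in> V" for w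
      using Suc.prems(3)[OF that] by auto
    have norm: "l1norm V (h(v := h v - s)) = int n"
      using l1norm_update_toward_zero[of V v s h, OF fin v] Suc.prems(4) by simp
    obtain fs where fs: "cwalk V E fs" "hd fs = height_coloring V (\<phi>(v := \<phi> v + 2 * s))"
      "last fs = height_coloring V \<psi>" "length fs = n + 1"
      using Suc.IH[OF moved Suc.prems(2) rel norm] by blast
    have "s = 1 \<or> s = -1" using v(2) by arith
    then have "\<not> 3 dvd 2 * s" by auto
    then have "cadj V (height_coloring V \<phi>) (height_coloring V (\<phi>(v := \<phi> v + 2 * s)))"
      by (rule cadj_height_coloring_update[OF v(1)])
    then have "cwalk V E (height_coloring V \<phi> # fs)"
      using cwalk_Cons[OF fs(1) proper3_height_coloring[OF edges Suc.prems(1)]] fs(2) by simp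
    moreover have "fs \<noteq> []" using fs(4) by auto
    ultimately show ?case using fs by (intro exI[of _ "height_coloring V \<phi> # fs"]) simp
  qed
  have "l1norm V h = int (nat (l1norm V h))" using l1norm_nonneg[of V h] by simp
  from walk[OF this] show ?thesis using that by blast
qed

lemma cadj_height_coloring_lift:
  assumes "\<Union>E \<subseteq> V" "height_fun E \<phi>" "proper3 V E g" "cadj V (height_coloring V \<phi>) g"
  obtains v s where "v \<in> V" "\<bar>s\<bar> = 1" "height_fun E (\<phi>(v := \<phi> v + 2 * s))"
    "height_coloring V (\<phi>(v := \<phi> v + 2 * s)) = g"
proof -
  have g: "g \<in> V \<rightarrow>\<^sub>E {0, 1, 2}" "\<And>a b. {a, b} \<in> E \<Longrightarrow> g a \<noteq> g b"
    using assms(3) unfolding proper3_def by blast+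
  obtain v where diff: "{u \<in> V. height_coloring V \<phi> u \<noteq> g u} = {v}"
    using assms(4) unfolding cadj_def by (rule card_1_singletonE)
  then have v: "v \<in> V" "height_coloring V \<phi> v \<noteq> g v" by auto
  have same: "g u = height_coloring V \<phi> u" if "u \<in> V" "u \<noteq> v" for u
  proof -
    have "u \<notin> {u \<in> V. height_coloring V \<phi> u \<noteq> g u}" using diff that(2) by simp
    then show ?thesis using that(1) by simp
  qed
  have "g v \<in> {0, 1, 2}" using g(1) v(1) by blast
  then have "int (g v) \<in> {0, 1, 2}" by auto
  moreover have "int (g v) \<noteq> \<phi> v mod 3" using v by (auto simp: height_coloring_apply)
  ultimately obtain s where s: "\<bar>s\<bar> = 1" "(\<phi> v + 2 * s) mod 3 = int (g v)" "(\<phi> v - s) mod 3 = int (g v)"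
    by (rule mod3_residue_by_unit)
  have "\<phi> w = \<phi> v + s" if e: "{v, w} \<in> E" for w
  proof (rule ccontr)
    assume "\<phi> w \<noteq> \<phi> v + s"
    then have "\<phi> w = \<phi> v - s" using height_funD[OF assms(2) e] s(1) by arith
    moreover have "w \<in> V" "w \<noteq> v" using e assms(1) height_fun_edge_distinct[OF assms(2) e] by auto
    ultimately have "g w = g v" using same s(3) by (simp add: height_coloring_apply)
    then show False using g(2)[OF e] by simp
  qed
  then have moved: "height_fun E (\<phi>(v := \<phi> v + 2 * s))" by (rule height_fun_update[OF assms(2) s(1)])
  have "height_coloring V (\<phi>(v := \<phi> v + 2 * s)) u = g u" for u
    using same[of u] s(2) v(1) PiE_arb[OF g(1), of u]
    by (cases "u \<in> V") (auto simp: height_coloring_def)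
  then have "height_coloring V (\<phi>(v := \<phi> v + 2 * s)) = g" by (rule ext)
  then show thesis by (rule that[OF v(1) s(1) moved])
qed

lemma cwalk_lift_height:
  assumes "is_tree V E" "cwalk V E fs" "height_fun E \<phi>" "hd fs = height_coloring V \<phi>"
  obtains \<psi> h where "height_fun E \<psi>" "height_coloring V \<psi> = last fs"
    "\<And>v. v \<in> V \<Longrightarrow> \<psi> v = \<phi> v + 2 * h v" "l1norm V h \<le> int (length fs - 1)"
proof -
  have fin: "finite V" using assms(1) unfolding is_tree_def by blast
  have edges: "\<Union>E \<subseteq> V" using tree_Union_edges_subset[OF assms(1)] .
  have "\<exists>\<psi> h. height_fun E \<psi> \<and> height_coloring V \<psi> = last fs \<and>
      (\<forall>v\<in>V. \<psi> v = \<phi> v + 2 * h v) \<and> l1norm V h \<le> int (length fs - 1)"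
    using assms(2-4)
  proof (induction fs arbitrary: \<phi>)
    case Nil
    then show ?case unfolding cwalk_def by simp
  next
    case (Cons f fs)
    show ?case
    proof (cases "fs = []")
      case True
      have "l1norm V (\<lambda>_. 0) = 0" unfolding l1norm_def by simp
      then show ?thesis using Cons.prems True by (intro exI[of _ \<phi>] exI[of _ "\<lambda>_. 0"]) simp
    next
      case False
      have walk: "cwalk V E fs" and "cadj V f (hd fs)" using cwalk_ConsD[OF Cons.prems(1) False] by auto
      moreover have "proper3 V E (hd fs)" using walk False unfolding cwalk_def by simp
      ultimately obtain v s where v: "v \<in> V" "\<bar>s\<bar> = 1"
        and moved: "height_fun E (\<phi>(v := \<phi> v + 2 * s))"
        and moved_col: "height_coloring V (\<phi>(v := \<phi> v + 2 * s)) = hd fs"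
        using cadj_height_coloring_lift[OF edges Cons.prems(2)] Cons.prems(3) by auto
      obtain \<psi> h where \<psi>: "height_fun E \<psi>" "height_coloring V \<psi> = last fs"
        and rel: "\<forall>u\<in>V. \<psi> u = (\<phi>(v := \<phi> v + 2 * s)) u + 2 * h u"
        and norm: "l1norm V h \<le> int (length fs - 1)"
        using Cons.IH[OF walk moved moved_col[symmetric]] by blast
      have "\<forall>u\<in>V. \<psi> u = \<phi> u + 2 * (h(v := h v + s)) u" using rel by auto
      moreover have "l1norm V (h(v := h v + s)) \<le> l1norm V h + 1"
        using l1norm_update_le[OF fin v(1), of h s] v(2) by simp
      then have "l1norm V (h(v := h v + s)) \<le> int (length (f # fs) - 1)"
        using norm False by (cases fs) auto
      ultimately have "height_fun E \<psi> \<and> height_coloring V \<psi> = last (f # fs) \<and>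
          (\<forall>u\<in>V. \<psi> u = \<phi> u + 2 * (h(v := h v + s)) u) \<and>
          l1norm V (h(v := h v + s)) \<le> int (length (f # fs) - 1)"
        using \<psi> False by simp
      then show ?thesis by blast
    qed
  qed
  then show ?thesis using that by blast
qed

section \<open>Distances and balanced labelings\<close>

lemma balanced_shift_exists:
  obtains m where "balanced V (\<lambda>v. h v + 3 * m)"
proof -
  obtain m where m: "\<And>m'. nat (l1norm V (\<lambda>v. h v + 3 * m)) \<le> nat (l1norm V (\<lambda>v. h v + 3 * m'))"
    using ex_has_least_nat[of "\<lambda>_. True" 0 "\<lambda>m. nat (l1norm V (\<lambda>v. h v + 3 * m))"] by blast
  have "l1norm V (\<lambda>v. h v + 3 * m) \<le> l1norm V (\<lambda>v. (h v + 3 * m) + 3 * m')" for m'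
  proof -
    have "(\<lambda>v. (h v + 3 * m) + 3 * m') = (\<lambda>v. h v + 3 * (m + m'))" by (simp add: algebra_simps)
    then show ?thesis using m[of "m + m'"] by (simp add: nat_le_eq_zle l1norm_nonneg)
  qed
  then show ?thesis using that unfolding balanced_def by blast
qed

lemma proper3_pair_lift:
  assumes "is_tree V E" "proper3 V E f" "proper3 V E g"
  obtains \<phi> \<psi> where "height_fun E \<phi>" "height_fun E \<psi>" "height_coloring V \<phi> = f"
    "height_coloring V \<psi> = g" "\<And>v. v \<in> V \<Longrightarrow> even (\<psi> v - \<phi> v)"
proof -
  obtain r where r: "r \<in> V" using assms(1) unfolding is_tree_def by blast
  obtain \<phi> where \<phi>: "height_fun E \<phi>" "height_coloring V \<phi> = f" using proper3_lift[OF assms(1,2)] .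
  obtain \<psi>\<^sub>0 where \<psi>\<^sub>0: "height_fun E \<psi>\<^sub>0" "height_coloring V \<psi>\<^sub>0 = g"
    using proper3_lift[OF assms(1,3)] .
  define \<psi> where "\<psi> = (\<lambda>v. \<psi>\<^sub>0 v + (if even (\<psi>\<^sub>0 r - \<phi> r) then 0 else 3))"
  have \<psi>_height: "height_fun E \<psi>" unfolding \<psi>_def by (rule height_fun_add_const[OF \<psi>\<^sub>0(1)])
  have \<psi>_col: "height_coloring V \<psi> = g"
    unfolding \<psi>\<^sub>0(2)[symmetric] height_coloring_eq_iff \<psi>_def by simp
  have "even (\<psi> r - \<phi> r)" unfolding \<psi>_def by auto
  then have "even (\<psi> v - \<phi> v)" if "v \<in> V" for v
    using height_funs_diff_parity[OF assms(1) \<phi>(1) \<psi>_height r that] by simp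
  then show thesis by (rule that[OF \<phi>(1) \<psi>_height \<phi>(2) \<psi>_col])
qed

lemma half_height_diff_labeling:
  assumes "\<Union>E \<subseteq> V" "height_fun E \<phi>" "height_fun E \<psi>" "\<And>v. v \<in> V \<Longrightarrow> even (\<psi> v - \<phi> v)"
  shows "is_labeling E (\<lambda>v. (\<psi> v - \<phi> v) div 2)"
  unfolding is_labeling_def
proof (intro allI impI)
  fix u v assume e: "{u, v} \<in> E"
  then have "u \<in> V" "v \<in> V" using assms(1) by auto
  then obtain a b where "\<psi> u - \<phi> u = 2 * a" "\<psi> v - \<phi> v = 2 * b" using assms(4) by (meson evenE)
  moreover have "(\<psi> v - \<phi> v) - (\<psi> u - \<phi> u) \<in> {-2, 0, 2}"
    using height_fun_diff_edge[OF assms(2,3) e] .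
  ultimately show "\<bar>(\<psi> u - \<phi> u) div 2 - (\<psi> v - \<phi> v) div 2\<bar> \<le> 1" by auto
qed

lemma cdist_le_balanced_labeling:
  assumes "is_tree V E" "proper3 V E f" "proper3 V E g"
  obtains h where "is_labeling E h" "balanced V h" "cdist V E f g \<le> enat (nat (l1norm V h))"
proof -
  obtain \<phi> \<psi> where \<phi>: "height_fun E \<phi>" "height_coloring V \<phi> = f"
    and \<psi>: "height_fun E \<psi>" "height_coloring V \<psi> = g"
    and even: "\<And>v. v \<in> V \<Longrightarrow> even (\<psi> v - \<phi> v)"
    using proper3_pair_lift[OF assms] by blast
  define h\<^sub>0 where "h\<^sub>0 = (\<lambda>v. (\<psi> v - \<phi> v) div 2)"
  obtain m where bal: "balanced V (\<lambda>v. h\<^sub>0 v + 3 * m)" using balanced_shift_exists .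
  have lab: "is_labeling E (\<lambda>v. h\<^sub>0 v + 3 * m)"
    using half_height_diff_labeling[OF tree_Union_edges_subset[OF assms(1)] \<phi>(1) \<psi>(1) even]
    unfolding is_labeling_def h\<^sub>0_def by simp
  have "(x + 6 * m) mod 3 = x mod 3" for x :: int by presburger
  then have col: "height_coloring V (\<lambda>v. \<psi> v + 6 * m) = g"
    unfolding \<psi>(2)[symmetric] height_coloring_eq_iff by simp
  have rel: "\<psi> v + 6 * m = \<phi> v + 2 * (h\<^sub>0 v + 3 * m)" if "v \<in> V" for v
    using even[OF that] unfolding h\<^sub>0_def by simp
  obtain fs where "cwalk V E fs" "hd fs = f" "last fs = g"
    "length fs = nat (l1norm V (\<lambda>v. h\<^sub>0 v + 3 * m)) + 1"
    using height_coloring_cwalk[OF assms(1) \<phi>(1) height_fun_add_const[OF \<psi>(1)] rel]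
    unfolding \<phi>(2) col by blast
  then have "cdist V E f g \<le> enat (nat (l1norm V (\<lambda>v. h\<^sub>0 v + 3 * m)))"
    using cdist_le_cwalk[of V E fs] by simp
  then show thesis by (rule that[OF lab bal])
qed

lemma balanced_labeling_le_cdist:
  assumes "is_tree V E" "is_labeling E h" "balanced V h"
  obtains f g where "proper3 V E f" "proper3 V E g" "enat (nat (l1norm V h)) \<le> cdist V E f g"
proof -
  have edges: "\<Union>E \<subseteq> V" using tree_Union_edges_subset[OF assms(1)] .
  obtain r where r: "r \<in> V" using assms(1) unfolding is_tree_def by blast
  obtain \<phi> where \<phi>: "height_fun E \<phi>" and \<psi>: "height_fun E (\<lambda>v. \<phi> v + 2 * h v)"
    using labeling_lift[OF assms(1,2)] .
  define f where "f = height_coloring V \<phi>"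
  define g where "g = height_coloring V (\<lambda>v. \<phi> v + 2 * h v)"
  have "enat (nat (l1norm V h)) \<le> enat (length fs - 1)"
    if fs: "cwalk V E fs" "hd fs = f" "last fs = g" for fs
  proof -
    obtain \<psi>' h' where \<psi>': "height_fun E \<psi>'" "height_coloring V \<psi>' = g"
      and rel: "\<And>v. v \<in> V \<Longrightarrow> \<psi>' v = \<phi> v + 2 * h' v" and norm: "l1norm V h' \<le> int (length fs - 1)"
      using cwalk_lift_height[OF assms(1) fs(1) \<phi>] fs(2,3) unfolding f_def by metis
    obtain k where k: "\<And>v. v \<in> V \<Longrightarrow> \<psi>' v = (\<phi> v + 2 * h v) + 3 * k"
      using height_coloring_eq_imp_shift[OF assms(1) \<psi> \<psi>'(1)] \<psi>'(2) unfolding g_def by metis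
    have "even (3 * k)" using rel[OF r] k[OF r] by presburger
    then obtain m where "k = 2 * m" by (auto elim: evenE)
    then have "h' v = h v + 3 * m" if "v \<in> V" for v using rel[OF that] k[OF that] by simp
    then have "l1norm V h' = l1norm V (\<lambda>v. h v + 3 * m)" by (rule l1norm_cong)
    moreover have "l1norm V h \<le> l1norm V (\<lambda>v. h v + 3 * m)" using assms(3) unfolding balanced_def by blast
    ultimately show ?thesis using norm by simp
  qed
  then have "enat (nat (l1norm V h)) \<le> cdist V E f g"
    unfolding cdist_def by (intro INF_greatest) blast
  moreover have "proper3 V E f" "proper3 V E g"
    unfolding f_def g_def using proper3_height_coloring[OF edges] \<phi> \<psi> by blast+
  ultimately show thesis using that by blast
qed

lemma finite_proper3: "finite V \<Longrightarrow> finite {f. proper3 V E f}"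
  by (rule finite_subset[of _ "V \<rightarrow>\<^sub>E {0, 1, 2}"]) (auto simp: proper3_def finite_PiE)

lemma SUP_enat_eq_Max:
  fixes F :: "'b \<Rightarrow> enat" and B :: "int set"
  assumes "finite P" "B \<noteq> {}" "\<And>b. b \<in> B \<Longrightarrow> 0 \<le> b"
    and le: "\<And>p. p \<in> P \<Longrightarrow> \<exists>b\<in>B. F p \<le> enat (nat b)"
    and ge: "\<And>b. b \<in> B \<Longrightarrow> \<exists>p\<in>P. enat (nat b) \<le> F p"
  shows "(SUP p\<in>P. F p) = enat (nat (Max B))"
proof -
  have "P \<noteq> {}" using assms(2) ge by blast
  then have "(SUP p\<in>P. F p) \<in> F ` P" using assms(1) by (simp add: cSup_eq_Max)
  then obtain D where D: "(SUP p\<in>P. F p) = enat D"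
    using le by (metis enat_ile imageE)
  have "B \<subseteq> {0..int D}"
  proof
    fix b assume "b \<in> B"
    then obtain p where "p \<in> P" "enat (nat b) \<le> F p" using ge by blast
    then have "enat (nat b) \<le> enat D" using D by (metis SUP_upper order_trans)
    then show "b \<in> {0..int D}" using assms(3)[OF \<open>b \<in> B\<close>] by simp
  qed
  then have "finite B" by (rule finite_subset) simp
  have "(SUP p\<in>P. F p) \<le> enat (nat (Max B))"
  proof (rule SUP_least)
    fix p assume "p \<in> P"
    then obtain b where "b \<in> B" "F p \<le> enat (nat b)" using le by blast
    moreover have "b \<le> Max B" using \<open>finite B\<close> \<open>b \<in> B\<close> by simp
    ultimately show "F p \<le> enat (nat (Max B))" by (meson enat_ord_simps(1) nat_mono order_trans)
  qed
  moreover obtain p where "p \<in> P" "enat (nat (Max B)) \<le> F p"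
    using ge[OF Max_in[OF \<open>finite B\<close> assms(2)]] by blast
  then have "enat (nat (Max B)) \<le> (SUP p\<in>P. F p)" by (meson SUP_upper order_trans)
  ultimately show ?thesis by (rule antisym)
qed

theorem mainTheorem7:
  fixes V :: "'a set" and E :: "'a set set"
  assumes "is_tree V E"
  shows "cdiam V E = enat (nat (Max {l1norm V h | h. is_labeling E h \<and> balanced V h}))"
proof -
  let ?P = "{(f, g). proper3 V E f \<and> proper3 V E g}"
  let ?B = "{l1norm V h | h. is_labeling E h \<and> balanced V h}"
  have "finite V" using assms unfolding is_tree_def by blast
  then have "finite ({f. proper3 V E f} \<times> {g. proper3 V E g})"
    by (intro finite_cartesian_product finite_proper3)
  moreover have "?P = {f. proper3 V E f} \<times> {g. proper3 V E g}" by auto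
  ultimately have fin: "finite ?P" by simp
  have "is_labeling E (\<lambda>_. 0)" unfolding is_labeling_def by simp
  moreover have "balanced V (\<lambda>_. 0)" unfolding balanced_def l1norm_def by (simp add: sum_nonneg)
  ultimately have ne: "?B \<noteq> {}" by blast
  show ?thesis unfolding cdiam_def
  proof (rule SUP_enat_eq_Max[OF fin ne])
    show "0 \<le> b" if "b \<in> ?B" for b using that l1norm_nonneg by blast
    show "\<exists>b\<in>?B. cdist V E (fst p) (snd p) \<le> enat (nat b)" if "p \<in> ?P" for p
    proof -
      have "proper3 V E (fst p)" "proper3 V E (snd p)" using that by auto
      then obtain h where "is_labeling E h" "balanced V h"
        "cdist V E (fst p) (snd p) \<le> enat (nat (l1norm V h))"
        by (rule cdist_le_balanced_labeling[OF assms])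
      then show ?thesis by blast
    qed
    show "\<exists>p\<in>?P. enat (nat b) \<le> cdist V E (fst p) (snd p)" if b: "b \<in> ?B" for b
    proof -
      obtain h where h: "b = l1norm V h" "is_labeling E h" "balanced V h" using b by blast
      obtain f g where "proper3 V E f" "proper3 V E g" "enat (nat b) \<le> cdist V E f g"
        using balanced_labeling_le_cdist[OF assms h(2,3)] unfolding h(1) .
      then show ?thesis by force
    qed
  qed
qed

end
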